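(* Let $n\ge 1$ and $d\ge 1$ be integers. Let $p:\mathbb{R}^3\to\mathbb{C}$ be a complex-valued homogeneous quadratic polynomial which is harmonic and horizontally conformal, i.e. $\tau(p)=0$ and $\kappa(p,p)=0$ on $\mathbb{R}^3$. Let $P_d,Q_d:\mathbb{C}^n\to\mathbb{C}$ be two linearly independent homogeneous polynomials in the complex variables $(z_1,\dots,z_n)$ (holomorphic, i.e. not involving $\bar z_k$) of the same degree $d$. Identify $\mathbb{R}^3\times\mathbb{C}^n$ with the Euclidean space $\mathbb{R}^{2n+3}$, and let $\mathcal Z(Q_d)=\{(x,z)\in\mathbb{R}^3\times\mathbb{C}^n : Q_d(z)=0\}$. Define $$\hat\Phi_d(x_1,x_2,x_3,z_1,\dots,z_n)=\frac{p(x_1,x_2,x_3)^{d/2}+P_d(z_1,\dots,z_n)}{Q_d(z_1,\dots,z_n)},$$ on $(\mathbb{R}^3\times\mathbb{C}^n)\setminus\mathcal Z(Q_d)$ if $d$ is even, and on $(\mathbb{R}^3\times\mathbb{C}^n)\setminus(\mathcal Z(Q_d)\cup\{(x,z): p(x)\in\mathbb{R},\ p(x)\le 0\})$ if $d$ is odd, where $p^{1/2}$ denotes the principal square root on $\mathbb{C}\setminus(-\infty,0]$. Then $\hat\Phi_d$ is a harmonic morphism on its domain.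
   Context: For complex-valued $C^2$ functions $\phi,\psi$ on $\mathbb{R}^3\times\mathbb{C}^n\cong\mathbb{R}^{2n+3}$ (Euclidean metric, $z_k=x_{2k+2}+i x_{2k+3}$), the tension field is $\tau(\phi)=\sum_{k=1}^3\partial^2\phi/\partial x_k^2+4\sum_{k=1}^n\partial^2\phi/\partial z_k\partial\bar z_k$ (the Laplacian) and the conformality operator is $\kappa(\phi,\psi)=\sum_{k=1}^3\frac{\partial\phi}{\partial x_k}\frac{\partial\psi}{\partial x_k}+2\sum_{k=1}^n\big(\frac{\partial\phi}{\partial z_k}\frac{\partial\psi}{\partial\bar z_k}+\frac{\partial\phi}{\partial\bar z_k}\frac{\partial\psi}{\partial z_k}\big)$, i.e. the complex-bilinear extension of the metric applied to the gradients. A map $\phi:(M,g)\to\mathbb{C}$ is a harmonic morphism if for every harmonic function $f$ on an open $U\subset\mathbb{C}$ with $\phi^{-1}(U)\neq\emptyset$, $f\circ\phi$ is harmonic on $\phi^{-1}(U)$; equivalently (Fuglede), $\tau(\phi)=0$ and $\kappa(\phi,\phi)=0$. *)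

theory Defs
  imports "HOL-Analysis.Analysis"
begin

definition pd :: "('a::euclidean_space \<Rightarrow> complex) \<Rightarrow> 'a \<Rightarrow> 'a \<Rightarrow> complex" where
  "pd f v q = vector_derivative (\<lambda>t::real. f (q + t *\<^sub>R v)) (at 0)"

definition C2_on :: "'a::euclidean_space set \<Rightarrow> ('a \<Rightarrow> complex) \<Rightarrow> bool" where
  "C2_on U f \<longleftrightarrow> f differentiable_on U \<and> (\<forall>b\<in>Basis. (pd f b) differentiable_on U)
     \<and> (\<forall>b\<in>Basis. \<forall>c\<in>Basis. continuous_on U (pd (pd f b) c))"

definition tension :: "('a::euclidean_space \<Rightarrow> complex) \<Rightarrow> 'a \<Rightarrow> complex" where
  "tension f q = (\<Sum>b\<in>Basis. pd (pd f b) b q)"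

definition kappa :: "('a::euclidean_space \<Rightarrow> complex) \<Rightarrow> ('a \<Rightarrow> complex) \<Rightarrow> 'a \<Rightarrow> complex" where
  "kappa f g q = (\<Sum>b\<in>Basis. pd f b q * pd g b q)"

definition harmonic_on :: "'a::euclidean_space set \<Rightarrow> ('a \<Rightarrow> complex) \<Rightarrow> bool" where
  "harmonic_on U f \<longleftrightarrow> C2_on U f \<and> (\<forall>q\<in>U. tension f q = 0)"

definition harmonic_morphism :: "'a::euclidean_space set \<Rightarrow> ('a \<Rightarrow> complex) \<Rightarrow> bool" where
  "harmonic_morphism D \<phi> \<longleftrightarrow> continuous_on D \<phi> \<and>
     (\<forall>U (f::complex \<Rightarrow> complex). open U \<and> harmonic_on U f \<and> D \<inter> \<phi> -` U \<noteq> {}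
        \<longrightarrow> harmonic_on (D \<inter> \<phi> -` U) (f \<circ> \<phi>))"

definition hom_quadratic :: "(real^3 \<Rightarrow> complex) \<Rightarrow> bool" where
  "hom_quadratic p \<longleftrightarrow> (\<exists>A::complex^3^3. \<forall>x. p x =
     (\<Sum>i\<in>UNIV. \<Sum>j\<in>UNIV. A$i$j * complex_of_real (x$i) * complex_of_real (x$j)))"

definition hom_hpoly :: "nat \<Rightarrow> (complex^'n::finite \<Rightarrow> complex) \<Rightarrow> bool" where
  "hom_hpoly d P \<longleftrightarrow> (\<exists>c :: ('n \<Rightarrow> nat) \<Rightarrow> complex. \<forall>z. P z =
     (\<Sum>\<alpha>\<in>{\<alpha>::'n \<Rightarrow> nat. sum \<alpha> UNIV = d}. c \<alpha> * (\<Prod>i\<in>UNIV. (z$i) ^ (\<alpha> i))))"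

end

theory Submission
  imports Defs "HOL-Complex_Analysis.Complex_Analysis"
begin

(* p(x) and the coordinates z_1, ..., z_n are harmonic on R^3 x C^n and pairwise
   kappa-orthogonal: kappa(p,p) = 0 by hypothesis, kappa(z_j,z_k) = 0 because the z_k are
   holomorphic, and p and z_k depend on disjoint variables. By the product rule
   tau(fg) = f tau(g) + g tau(f) + 2 kappa(f,g) and the chain rule
   tau(h o f) = h' tau(f) + h'' kappa(f,f) for holomorphic h, the harmonic functions that are
   kappa-orthogonal to the generators and to every C^2 function kappa-orthogonal to the
   generators form a class closed under sums, products and holomorphic maps. It contains the
   quotient, and its members are harmonic and horizontally conformal, which by the real chain
   rule makes f o phi harmonic for every harmonic f. *)

no_notation fps_nth (infixl \<open>$\<close> 75)

lemma pd_eq_derivative: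
  assumes "(f has_derivative f') (at q)"
  shows "pd f v q = f' v"
proof -
  have "((\<lambda>t::real. q + t *\<^sub>R v) has_derivative (\<lambda>t. t *\<^sub>R v)) (at 0)"
    by (auto intro!: derivative_eq_intros)
  with assms have "((\<lambda>t. f (q + t *\<^sub>R v)) has_derivative (\<lambda>t. f' (t *\<^sub>R v))) (at 0)"
    using diff_chain_at[of "\<lambda>t::real. q + t *\<^sub>R v" _ 0 f f'] by (simp add: o_def)
  then have "((\<lambda>t. f (q + t *\<^sub>R v)) has_vector_derivative f' v) (at 0)"
    using linear_scale[OF has_derivative_linear[OF assms]] by (simp add: has_vector_derivative_def)
  then show ?thesis unfolding pd_def by (rule vector_derivative_at)
qed

lemma has_derivative_pd:
  assumes "f differentiable (at q)"
  shows "(f has_derivative (\<lambda>v. pd f v q)) (at q)"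
proof -
  obtain f' where f': "(f has_derivative f') (at q)" using assms differentiable_def by blast
  moreover have "(\<lambda>v. pd f v q) = f'" using pd_eq_derivative[OF f'] by auto
  ultimately show ?thesis by simp
qed

lemma pd_cong_open:
  assumes "open S" "q \<in> S" "\<And>y. y \<in> S \<Longrightarrow> f y = g y"
  shows "pd f v q = pd g v q"
proof -
  let ?T = "{t::real. q + t *\<^sub>R v \<in> S}"
  have "continuous_on UNIV (\<lambda>t::real. q + t *\<^sub>R v)"
    by (intro continuous_intros)
  then have "open ?T"
    using open_vimage[OF assms(1)] by (simp add: vimage_def)
  moreover have "0 \<in> ?T" using assms by simp
  ultimately have "eventually (\<lambda>t. t \<in> ?T) (nhds 0)"
    by (rule eventually_nhds_in_open)
  then have "eventually (\<lambda>t. t \<in> UNIV \<longrightarrow> f (q + t *\<^sub>R v) = g (q + t *\<^sub>R v)) (nhds 0)"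
    by (rule eventually_mono) (simp add: assms(3))
  then show ?thesis
    unfolding pd_def by (intro vector_derivative_cong_eq) auto
qed

lemma differentiable_on_transform_open:
  assumes "open S" "\<And>y. y \<in> S \<Longrightarrow> f y = g y" "f differentiable_on S"
  shows "g differentiable_on S"
  using assms unfolding differentiable_on_def differentiable_def
  by (metis has_derivative_transform)

lemma pd_add:
  "f differentiable (at q) \<Longrightarrow> g differentiable (at q) \<Longrightarrow>
    pd (\<lambda>x. f x + g x) v q = pd f v q + pd g v q"
  by (intro pd_eq_derivative has_derivative_add has_derivative_pd)

lemma pd_mult:
  "f differentiable (at q) \<Longrightarrow> g differentiable (at q) \<Longrightarrow>
    pd (\<lambda>x. f x * g x) v q = f q * pd g v q + pd f v q * g q"
  by (intro pd_eq_derivative has_derivative_mult has_derivative_pd)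

lemma pd_const: "pd (\<lambda>x. c) v = (\<lambda>q. 0)"
  by (simp add: pd_def fun_eq_iff)

lemma pd_zero: "pd f 0 = (\<lambda>q. 0)"
  by (simp add: pd_def fun_eq_iff)

lemma pd_compose:
  "f differentiable (at q) \<Longrightarrow> g differentiable (at (f q)) \<Longrightarrow>
    pd (\<lambda>x. g (f x)) v q = pd g (pd f v q) (f q)"
  using diff_chain_at[OF has_derivative_pd has_derivative_pd, of f q g] pd_eq_derivative
  by (simp add: o_def)

lemma pd_linear: "bounded_linear l \<Longrightarrow> pd l v q = l v"
  by (intro pd_eq_derivative bounded_linear_imp_has_derivative)

lemma pd_complex_domain:
  fixes g :: "complex \<Rightarrow> complex"
  assumes "g differentiable (at w)"
  shows "pd g h w = of_real (Re h) * pd g 1 w + of_real (Im h) * pd g \<i> w"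
proof -
  have l: "linear (\<lambda>v. pd g v w)" using has_derivative_pd[OF assms] has_derivative_linear by blast
  have "h = Re h *\<^sub>R 1 + Im h *\<^sub>R \<i>" by (simp add: complex_eq_iff)
  then have "pd g h w = pd g (Re h *\<^sub>R 1 + Im h *\<^sub>R \<i>) w" by simp
  also have "\<dots> = Re h *\<^sub>R pd g 1 w + Im h *\<^sub>R pd g \<i> w"
    using linear_add[OF l] linear_scale[OF l] by simp
  finally show ?thesis by (simp add: scaleR_conv_of_real)
qed

lemma pd_holomorphic:
  fixes g :: "complex \<Rightarrow> complex"
  assumes "g field_differentiable (at w)"
  shows "pd g h w = deriv g w * h"
  using assms DERIV_deriv_iff_field_differentiable has_field_derivative_imp_has_derivative pd_eq_derivative
  by metis

lemma pd_of_real_Re: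
  "h differentiable (at q) \<Longrightarrow> pd (\<lambda>x. of_real (Re (h x))) v q = of_real (Re (pd h v q))"
  by (intro pd_eq_derivative derivative_intros has_derivative_pd)

lemma pd_of_real_Im:
  "h differentiable (at q) \<Longrightarrow> pd (\<lambda>x. of_real (Im (h x))) v q = of_real (Im (pd h v q))"
  by (intro pd_eq_derivative derivative_intros has_derivative_pd)

lemma differentiable_of_real_Re:
  "h differentiable F \<Longrightarrow> (\<lambda>x. complex_of_real (Re (h x))) differentiable F"
  unfolding differentiable_def using has_derivative_of_real[OF has_derivative_Re] by blast

lemma differentiable_of_real_Im:
  "h differentiable F \<Longrightarrow> (\<lambda>x. complex_of_real (Im (h x))) differentiable F"
  unfolding differentiable_def using has_derivative_of_real[OF has_derivative_Im] by blast

lemma pd_fst: "pd (\<lambda>q. F (fst q)) v = (\<lambda>q. pd F (fst v) (fst q))"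
  by (simp add: pd_def fun_eq_iff)

lemma pd_snd: "pd (\<lambda>q. F (snd q)) v = (\<lambda>q. pd F (snd v) (snd q))"
  by (simp add: pd_def fun_eq_iff)

lemma C2_on_differentiable_at: "open S \<Longrightarrow> C2_on S f \<Longrightarrow> x \<in> S \<Longrightarrow> f differentiable (at x)"
  by (simp add: C2_on_def differentiable_on_eq_differentiable_at)

lemma C2_on_pd_differentiable_at:
  "open S \<Longrightarrow> C2_on S f \<Longrightarrow> x \<in> S \<Longrightarrow> b \<in> Basis \<Longrightarrow> pd f b differentiable (at x)"
  by (simp add: C2_on_def differentiable_on_eq_differentiable_at)

lemma C2_on_continuous: "C2_on S f \<Longrightarrow> continuous_on S f"
  by (simp add: C2_on_def differentiable_imp_continuous_on)

lemma C2_on_pd_continuous: "C2_on S f \<Longrightarrow> b \<in> Basis \<Longrightarrow> continuous_on S (pd f b)"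
  by (simp add: C2_on_def differentiable_imp_continuous_on)

lemma C2_on_pd_pd_continuous:
  "C2_on S f \<Longrightarrow> b \<in> Basis \<Longrightarrow> c \<in> Basis \<Longrightarrow> continuous_on S (pd (pd f b) c)"
  by (simp add: C2_on_def)

lemma C2_on_subset: "C2_on S f \<Longrightarrow> T \<subseteq> S \<Longrightarrow> C2_on T f"
  unfolding C2_on_def by (metis differentiable_on_subset continuous_on_subset)

lemma C2_on_const: "C2_on S (\<lambda>x. c)"
  by (simp add: C2_on_def pd_const)

lemma C2_on_linear:
  assumes "bounded_linear l"
  shows "C2_on S l"
proof -
  have "pd l v = (\<lambda>q. l v)" for v
    using pd_linear[OF assms] by auto
  then show ?thesis
    using bounded_linear_imp_differentiable_on[OF assms] by (simp add: C2_on_def pd_const)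
qed

lemma pd_pd_add:
  assumes S: "open S" and f: "C2_on S f" and g: "C2_on S g" and x: "x \<in> S" and b: "b \<in> Basis"
  shows "pd (pd (\<lambda>x. f x + g x) b) c x = pd (pd f b) c x + pd (pd g b) c x"
proof -
  have "pd (pd (\<lambda>x. f x + g x) b) c x = pd (\<lambda>x. pd f b x + pd g b x) c x"
    using pd_add C2_on_differentiable_at[OF S f] C2_on_differentiable_at[OF S g]
    by (intro pd_cong_open[OF S x]) blast
  also have "\<dots> = pd (pd f b) c x + pd (pd g b) c x"
    by (intro pd_add C2_on_pd_differentiable_at[OF S _ x b] f g)
  finally show ?thesis .
qed

lemma C2_on_add:
  assumes S: "open S" and f: "C2_on S f" and g: "C2_on S g"
  shows "C2_on S (\<lambda>x. f x + g x)"
proof -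
  have "pd (\<lambda>x. f x + g x) b differentiable_on S" if b: "b \<in> Basis" for b
  proof (rule differentiable_on_transform_open[OF S])
    show "(\<lambda>x. pd f b x + pd g b x) differentiable_on S"
      using f g b by (simp add: C2_on_def)
    show "pd f b y + pd g b y = pd (\<lambda>x. f x + g x) b y" if "y \<in> S" for y
      using pd_add[OF C2_on_differentiable_at[OF S f that] C2_on_differentiable_at[OF S g that]] by simp
  qed
  moreover have "continuous_on S (pd (pd (\<lambda>x. f x + g x) b) c)" if bc: "b \<in> Basis" "c \<in> Basis" for b c
    by (rule continuous_on_eq[OF _ pd_pd_add[OF S f g _ bc(1), symmetric]])
      (intro continuous_on_add C2_on_pd_pd_continuous[OF f] C2_on_pd_pd_continuous[OF g] bc)
  ultimately show ?thesis
    using f g by (simp add: C2_on_def)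
qed

lemma pd_pd_mult:
  assumes S: "open S" and f: "C2_on S f" and g: "C2_on S g" and x: "x \<in> S" and b: "b \<in> Basis"
  shows "pd (pd (\<lambda>x. f x * g x) b) c x = f x * pd (pd g b) c x + pd f c x * pd g b x
     + (pd f b x * pd g c x + pd (pd f b) c x * g x)"
proof -
  note df = C2_on_differentiable_at[OF S _ x] C2_on_pd_differentiable_at[OF S _ x b]
  have "pd (pd (\<lambda>x. f x * g x) b) c x = pd (\<lambda>x. f x * pd g b x + pd f b x * g x) c x"
    using pd_mult C2_on_differentiable_at[OF S f] C2_on_differentiable_at[OF S g]
    by (intro pd_cong_open[OF S x]) blast
  also have "\<dots> = pd (\<lambda>x. f x * pd g b x) c x + pd (\<lambda>x. pd f b x * g x) c x"
    using df f g by (intro pd_add differentiable_mult) auto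
  also have "\<dots> = f x * pd (pd g b) c x + pd f c x * pd g b x
     + (pd f b x * pd g c x + pd (pd f b) c x * g x)"
    using df f g by (simp add: pd_mult)
  finally show ?thesis .
qed

lemma C2_on_mult:
  assumes S: "open S" and f: "C2_on S f" and g: "C2_on S g"
  shows "C2_on S (\<lambda>x. f x * g x)"
proof -
  have "pd (\<lambda>x. f x * g x) b differentiable_on S" if b: "b \<in> Basis" for b
  proof (rule differentiable_on_transform_open[OF S])
    show "(\<lambda>x. f x * pd g b x + pd f b x * g x) differentiable_on S"
      using f g b by (simp add: C2_on_def)
    show "f y * pd g b y + pd f b y * g y = pd (\<lambda>x. f x * g x) b y" if "y \<in> S" for y
      using pd_mult[OF C2_on_differentiable_at[OF S f that] C2_on_differentiable_at[OF S g that]] by simp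
  qed
  moreover have "continuous_on S (pd (pd (\<lambda>x. f x * g x) b) c)" if bc: "b \<in> Basis" "c \<in> Basis" for b c
    by (rule continuous_on_eq[OF _ pd_pd_mult[OF S f g _ bc(1), symmetric]])
      (intro continuous_intros C2_on_continuous[OF f] C2_on_continuous[OF g]
        C2_on_pd_continuous[OF f] C2_on_pd_continuous[OF g]
        C2_on_pd_pd_continuous[OF f] C2_on_pd_pd_continuous[OF g] bc)
  ultimately show ?thesis
    using f g by (simp add: C2_on_def)
qed

lemma C2_on_sum:
  assumes "open S" "\<And>i. i \<in> I \<Longrightarrow> C2_on S (f i)"
  shows "C2_on S (\<lambda>x. \<Sum>i\<in>I. f i x)"
  using assms by (induction I rule: infinite_finite_induct) (auto intro!: C2_on_add C2_on_const)

lemma C2_on_fst: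
  fixes F :: "'a::euclidean_space \<Rightarrow> complex"
  assumes F: "C2_on UNIV F"
  shows "C2_on S (\<lambda>q::'a \<times> 'b::euclidean_space. F (fst q))"
proof -
  have compose_differentiable: "(\<lambda>q. H (fst q)) differentiable_on S"
    if "H differentiable_on UNIV" for H :: "'a \<Rightarrow> complex"
    using differentiable_on_compose[OF bounded_linear_imp_differentiable_on[OF bounded_linear_fst]
        differentiable_on_subset[OF that subset_UNIV]] .
  have compose_continuous: "continuous_on S (\<lambda>q. H (fst q))"
    if "continuous_on UNIV H" for H :: "'a \<Rightarrow> complex"
    using continuous_on_compose2[OF that continuous_on_fst[OF continuous_on_id'], of S] by simp
  have fst_Basis: "fst b = 0 \<or> fst b \<in> Basis" if "b \<in> Basis" for b :: "'a \<times> 'b"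
    using that by (auto simp: Basis_prod_def)
  show ?thesis
    unfolding C2_on_def pd_fst
  proof (intro conjI ballI)
    show "(\<lambda>q. F (fst q)) differentiable_on S"
      using F by (intro compose_differentiable) (simp add: C2_on_def)
  next
    fix b :: "'a \<times> 'b" assume "b \<in> Basis"
    then consider "fst b = 0" | "fst b \<in> Basis"
      using fst_Basis by blast
    then have "pd F (fst b) differentiable_on UNIV"
      by cases (use F in \<open>simp_all add: C2_on_def pd_zero\<close>)
    then show "(\<lambda>q. pd F (fst b) (fst q)) differentiable_on S"
      by (rule compose_differentiable)
  next
    fix b c :: "'a \<times> 'b" assume "b \<in> Basis" "c \<in> Basis"
    then consider "fst b = 0" | "fst c = 0" | "fst b \<in> Basis" "fst c \<in> Basis"
      using fst_Basis by blast
    then have "continuous_on UNIV (pd (pd F (fst b)) (fst c))"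
      by cases (use F in \<open>simp_all add: C2_on_def pd_zero pd_const\<close>)
    then show "continuous_on S (\<lambda>q. pd (pd F (fst b)) (fst c) (fst q))"
      by (rule compose_continuous)
  qed
qed

lemma C2_on_hom_quadratic: "hom_quadratic p \<Longrightarrow> C2_on UNIV p"
proof -
  assume "hom_quadratic p"
  then obtain A :: "complex^3^3" where A: "p = (\<lambda>x. \<Sum>i\<in>UNIV. \<Sum>j\<in>UNIV.
      A$i$j * complex_of_real (x$i) * complex_of_real (x$j))"
    unfolding hom_quadratic_def by blast
  have "bounded_linear (\<lambda>x::real^3. complex_of_real (x$i))" for i
    by (intro bounded_linear_compose[OF bounded_linear_of_real] bounded_linear_vec_nth)
  then show ?thesis
    unfolding A by (intro C2_on_sum C2_on_mult C2_on_const C2_on_linear open_UNIV)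
qed

section \<open>Composition with functions of a complex variable\<close>

lemma pd_pd_holomorphic:
  assumes U: "open U" and g: "g holomorphic_on U" and w: "w \<in> U"
  shows "pd (pd g u) v w = deriv (deriv g) w * v * u"
proof -
  have g': "deriv g field_differentiable (at w)"
    using holomorphic_on_imp_differentiable_at[OF holomorphic_deriv[OF g U] U w] .
  have "pd (pd g u) v w = pd (\<lambda>y. deriv g y * u) v w"
    using holomorphic_on_imp_differentiable_at[OF g U]
    by (intro pd_cong_open[OF U w]) (simp add: pd_holomorphic)
  also have "\<dots> = deriv (deriv g) w * v * u"
    using pd_mult[OF field_differentiable_imp_differentiable[OF g'], of "\<lambda>_. u"]
    by (simp add: pd_holomorphic[OF g'] pd_const)
  finally show ?thesis .
qed

lemma C2_on_holomorphic:
  assumes U: "open U" and g: "g holomorphic_on U"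
  shows "C2_on U g"
proof -
  have "pd g u differentiable_on U" for u
  proof (rule differentiable_on_transform_open[OF U])
    show "(\<lambda>w. deriv g w * u) differentiable_on U"
      using holomorphic_deriv[OF g U] by (simp add: holomorphic_on_imp_differentiable_on)
    show "deriv g w * u = pd g u w" if "w \<in> U" for w
      using pd_holomorphic[OF holomorphic_on_imp_differentiable_at[OF g U that]] by simp
  qed
  moreover have "continuous_on U (pd (pd g u) v)" for u v
    by (rule continuous_on_eq[OF _ pd_pd_holomorphic[OF U g, symmetric]])
      (intro continuous_intros holomorphic_on_imp_continuous_on holomorphic_deriv g U)
  ultimately show ?thesis
    using holomorphic_on_imp_differentiable_on[OF g] by (simp add: C2_on_def)
qed

lemma harmonic_on_holomorphic: "open U \<Longrightarrow> g holomorphic_on U \<Longrightarrow> harmonic_on U g"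
  by (simp add: harmonic_on_def C2_on_holomorphic tension_def Basis_complex_def pd_pd_holomorphic
      mult.assoc)

abbreviation ReC :: "complex \<Rightarrow> complex" where "ReC z \<equiv> of_real (Re z)"
abbreviation ImC :: "complex \<Rightarrow> complex" where "ImC z \<equiv> of_real (Im z)"

lemma one_in_Basis_complex: "(1::complex) \<in> Basis" and ii_in_Basis_complex: "\<i> \<in> Basis"
  by (simp_all add: Basis_complex_def)

context
  fixes g :: "complex \<Rightarrow> complex" and f :: "'a::euclidean_space \<Rightarrow> complex" and S U
  assumes S: "open S" and U: "open U" and g: "C2_on U g" and f: "C2_on S f"
    and f_in_U: "\<And>x. x \<in> S \<Longrightarrow> f x \<in> U"
begin

lemma pd_compose_complex:
  assumes x: "x \<in> S"
  shows "pd (\<lambda>x. g (f x)) b x = ReC (pd f b x) * pd g 1 (f x) + ImC (pd f b x) * pd g \<i> (f x)"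
  unfolding pd_compose[OF C2_on_differentiable_at[OF S f x] C2_on_differentiable_at[OF U g f_in_U[OF x]]]
  by (rule pd_complex_domain[OF C2_on_differentiable_at[OF U g f_in_U[OF x]]])

lemma pd_pd_compose_complex:
  assumes x: "x \<in> S" and b: "b \<in> Basis"
  shows "pd (pd (\<lambda>x. g (f x)) b) c x =
    ReC (pd (pd f b) c x) * pd g 1 (f x)
      + ReC (pd f b x) * (ReC (pd f c x) * pd (pd g 1) 1 (f x) + ImC (pd f c x) * pd (pd g 1) \<i> (f x))
    + (ImC (pd (pd f b) c x) * pd g \<i> (f x)
      + ImC (pd f b x) * (ReC (pd f c x) * pd (pd g \<i>) 1 (f x) + ImC (pd f c x) * pd (pd g \<i>) \<i> (f x)))"
proof -
  have fx: "f differentiable (at x)" and fbx: "pd f b differentiable (at x)"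
    using C2_on_differentiable_at[OF S f x] C2_on_pd_differentiable_at[OF S f x b] .
  have g'x: "pd g u differentiable (at (f x))" if "u \<in> Basis" for u
    using C2_on_pd_differentiable_at[OF U g f_in_U[OF x] that] .
  have ReIm: "(\<lambda>x. ReC (pd f b x)) differentiable (at x)" "(\<lambda>x. ImC (pd f b x)) differentiable (at x)"
    using differentiable_of_real_Re[OF fbx] differentiable_of_real_Im[OF fbx] .
  have g'f: "(\<lambda>x. pd g u (f x)) differentiable (at x)" if "u \<in> Basis" for u
    using differentiable_chain_at[OF fx g'x[OF that]] by (simp add: o_def)
  have "pd (pd (\<lambda>x. g (f x)) b) c x =
      pd (\<lambda>x. ReC (pd f b x) * pd g 1 (f x) + ImC (pd f b x) * pd g \<i> (f x)) c x"
    using pd_compose_complex by (rule pd_cong_open[OF S x])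
  also have "\<dots> = pd (\<lambda>x. ReC (pd f b x) * pd g 1 (f x)) c x + pd (\<lambda>x. ImC (pd f b x) * pd g \<i> (f x)) c x"
    using ReIm g'f one_in_Basis_complex ii_in_Basis_complex by (intro pd_add differentiable_mult) auto
  also have "\<dots> = ReC (pd (pd f b) c x) * pd g 1 (f x) + ReC (pd f b x) * pd (\<lambda>x. pd g 1 (f x)) c x
     + (ImC (pd (pd f b) c x) * pd g \<i> (f x) + ImC (pd f b x) * pd (\<lambda>x. pd g \<i> (f x)) c x)"
    using ReIm g'f[OF one_in_Basis_complex] g'f[OF ii_in_Basis_complex]
    by (simp add: pd_mult pd_of_real_Re[OF fbx] pd_of_real_Im[OF fbx])
  also have "pd (\<lambda>x. pd g 1 (f x)) c x = ReC (pd f c x) * pd (pd g 1) 1 (f x) + ImC (pd f c x) * pd (pd g 1) \<i> (f x)"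
    unfolding pd_compose[OF fx g'x[OF one_in_Basis_complex]]
    by (rule pd_complex_domain[OF g'x[OF one_in_Basis_complex]])
  also have "pd (\<lambda>x. pd g \<i> (f x)) c x = ReC (pd f c x) * pd (pd g \<i>) 1 (f x) + ImC (pd f c x) * pd (pd g \<i>) \<i> (f x)"
    unfolding pd_compose[OF fx g'x[OF ii_in_Basis_complex]]
    by (rule pd_complex_domain[OF g'x[OF ii_in_Basis_complex]])
  finally show ?thesis .
qed

lemma C2_on_compose: "C2_on S (\<lambda>x. g (f x))"
proof -
  have f_image: "f ` S \<subseteq> U"
    using f_in_U by blast
  have compose_differentiable: "(\<lambda>x. h (f x)) differentiable_on S" if "h differentiable_on U" for h
    using differentiable_on_compose[OF _ differentiable_on_subset[OF that f_image]] f
    by (simp add: C2_on_def)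
  have compose_continuous: "continuous_on S (\<lambda>x. h (f x))" if "continuous_on U h" for h
    by (rule continuous_on_compose2[OF that C2_on_continuous[OF f] f_image])
  have of_real_Re_Im: "(\<lambda>x. ReC (pd f b x)) differentiable_on S" "(\<lambda>x. ImC (pd f b x)) differentiable_on S"
    if "b \<in> Basis" for b
    using f that
    by (auto simp: C2_on_def differentiable_on_def intro!: differentiable_of_real_Re differentiable_of_real_Im)
  have "pd (\<lambda>x. g (f x)) b differentiable_on S" if b: "b \<in> Basis" for b
    by (rule differentiable_on_transform_open[OF S pd_compose_complex[symmetric]])
      (simp, use g one_in_Basis_complex ii_in_Basis_complex in \<open>intro differentiable_on_add
        differentiable_on_mult of_real_Re_Im[OF b] compose_differentiable; simp add: C2_on_def\<close>)
  moreover have "continuous_on S (pd (pd (\<lambda>x. g (f x)) b) c)" if bc: "b \<in> Basis" "c \<in> Basis" for b c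
    by (rule continuous_on_eq[OF _ pd_pd_compose_complex[OF _ bc(1), symmetric]])
      (intro continuous_intros compose_continuous C2_on_pd_continuous[OF f] C2_on_pd_pd_continuous[OF f]
        C2_on_pd_continuous[OF g] C2_on_pd_pd_continuous[OF g] bc one_in_Basis_complex ii_in_Basis_complex)
  ultimately show ?thesis
    using g by (simp add: C2_on_def compose_differentiable)
qed

text \<open>When \<open>kappa f f = 0\<close>, the gradients of \<open>Re f\<close> and \<open>Im f\<close> are orthogonal and of
  equal length, so the second-order terms collapse to the Laplacian of \<open>g\<close>.\<close>

lemma tension_compose:
  assumes x: "x \<in> S" and "tension f x = 0" and "kappa f f x = 0" and "tension g (f x) = 0"
  shows "tension (\<lambda>x. g (f x)) x = 0"
proof -
  define gx gy gxx gxy gyx gyy where "gx = pd g 1 (f x)" and "gy = pd g \<i> (f x)"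
    and "gxx = pd (pd g 1) 1 (f x)" and "gxy = pd (pd g 1) \<i> (f x)"
    and "gyx = pd (pd g \<i>) 1 (f x)" and "gyy = pd (pd g \<i>) \<i> (f x)"
  have "tension (\<lambda>x. g (f x)) x = (\<Sum>b\<in>Basis. ReC (pd (pd f b) b x) * gx
      + ReC (pd f b x) * (ReC (pd f b x) * gxx + ImC (pd f b x) * gxy)
    + (ImC (pd (pd f b) b x) * gy + ImC (pd f b x) * (ReC (pd f b x) * gyx + ImC (pd f b x) * gyy)))"
    unfolding tension_def gx_def gy_def gxx_def gxy_def gyx_def gyy_def
    by (simp add: pd_pd_compose_complex[OF x])
  also have "\<dots> = gx * (\<Sum>b\<in>Basis. ReC (pd (pd f b) b x)) + gy * (\<Sum>b\<in>Basis. ImC (pd (pd f b) b x))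
     + gxx * (\<Sum>b\<in>Basis. ReC (pd f b x) * ReC (pd f b x))
     + (gxy + gyx) * (\<Sum>b\<in>Basis. ReC (pd f b x) * ImC (pd f b x))
     + gyy * (\<Sum>b\<in>Basis. ImC (pd f b x) * ImC (pd f b x))"
    by (simp add: sum.distrib sum_distrib_left algebra_simps)
  also have "(\<Sum>b\<in>Basis. ReC (pd (pd f b) b x)) = ReC (tension f x)"
    by (simp add: tension_def Re_sum)
  also have "(\<Sum>b\<in>Basis. ImC (pd (pd f b) b x)) = ImC (tension f x)"
    by (simp add: tension_def Im_sum)
  also have "(\<Sum>b\<in>Basis. ReC (pd f b x) * ImC (pd f b x)) = of_real (Im (kappa f f x) / 2)"
    by (simp add: kappa_def Im_sum sum_divide_distrib) (simp add: mult.commute)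
  also have "(\<Sum>b\<in>Basis. ImC (pd f b x) * ImC (pd f b x))
      = (\<Sum>b\<in>Basis. ReC (pd f b x) * ReC (pd f b x)) - ReC (kappa f f x)"
    by (simp add: kappa_def Re_sum sum_subtractf[symmetric] algebra_simps)
  also have "gxx + gyy = 0"
    using assms(4) unfolding tension_def Basis_complex_def gxx_def gyy_def by simp
  ultimately show ?thesis
    using assms(2,3) by (simp add: distrib_right[symmetric])
qed

end

lemma tension_const: "tension (\<lambda>x. c) x = 0"
  by (simp add: tension_def pd_const)

lemma tension_linear:
  assumes "bounded_linear l"
  shows "tension l x = 0"
proof -
  have "pd l v = (\<lambda>q. l v)" for v
    using pd_linear[OF assms] by auto
  then show ?thesis
    by (simp add: tension_def pd_const)
qed

lemma tension_add:
  assumes "open S" "C2_on S f" "C2_on S g" "x \<in> S"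
  shows "tension (\<lambda>x. f x + g x) x = tension f x + tension g x"
  by (simp add: tension_def pd_pd_add[OF assms] sum.distrib)

lemma tension_mult:
  assumes "open S" "C2_on S f" "C2_on S g" "x \<in> S"
  shows "tension (\<lambda>x. f x * g x) x = f x * tension g x + g x * tension f x + 2 * kappa f g x"
  by (simp add: tension_def kappa_def pd_pd_mult[OF assms] sum.distrib sum_distrib_left algebra_simps)

lemma kappa_commute: "kappa f g x = kappa g f x"
  by (simp add: kappa_def mult.commute)

lemma kappa_const: "kappa (\<lambda>x. c) h x = 0"
  by (simp add: kappa_def pd_const)

lemma kappa_add:
  "f differentiable (at x) \<Longrightarrow> g differentiable (at x) \<Longrightarrow>
    kappa (\<lambda>x. f x + g x) h x = kappa f h x + kappa g h x"
  by (simp add: kappa_def pd_add sum.distrib algebra_simps)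

lemma kappa_mult:
  "f differentiable (at x) \<Longrightarrow> g differentiable (at x) \<Longrightarrow>
    kappa (\<lambda>x. f x * g x) h x = f x * kappa g h x + g x * kappa f h x"
  by (simp add: kappa_def pd_mult sum.distrib sum_distrib_left algebra_simps)

lemma kappa_compose_holomorphic:
  assumes "f differentiable (at x)" and "g field_differentiable (at (f x))"
  shows "kappa (\<lambda>x. g (f x)) h x = deriv g (f x) * kappa f h x"
  using pd_compose[OF assms(1) field_differentiable_imp_differentiable[OF assms(2)]]
  by (simp add: kappa_def pd_holomorphic[OF assms(2)] sum_distrib_left algebra_simps)

lemma harmonic_morphismI:
  assumes D: "open D" and \<phi>: "C2_on D \<phi>"
    and "\<And>x. x \<in> D \<Longrightarrow> tension \<phi> x = 0" and "\<And>x. x \<in> D \<Longrightarrow> kappa \<phi> \<phi> x = 0"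
  shows "harmonic_morphism D \<phi>"
  unfolding harmonic_morphism_def
proof (intro conjI allI impI)
  show "continuous_on D \<phi>"
    using C2_on_continuous[OF \<phi>] .
  fix U and f :: "complex \<Rightarrow> complex"
  assume "open U \<and> harmonic_on U f \<and> D \<inter> \<phi> -` U \<noteq> {}"
  then have U: "open U" and f: "C2_on U f" and "\<And>w. w \<in> U \<Longrightarrow> tension f w = 0"
    by (auto simp: harmonic_on_def)
  have S: "open (D \<inter> \<phi> -` U)"
    using continuous_on_open_vimage[OF D, THEN iffD1, OF C2_on_continuous[OF \<phi>], rule_format, OF U]
    by (simp add: Int_commute)
  have "C2_on (D \<inter> \<phi> -` U) \<phi>"
    using C2_on_subset[OF \<phi>] by blast
  then show "harmonic_on (D \<inter> \<phi> -` U) (f \<circ> \<phi>)"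
    using C2_on_compose[OF S U f] tension_compose[OF S U f] assms(3,4) \<open>\<And>w. w \<in> U \<Longrightarrow> tension f w = 0\<close>
    by (auto simp: harmonic_on_def o_def)
qed

section \<open>An algebra of harmonic and horizontally conformal functions\<close>

text \<open>If \<open>f\<close> and \<open>g\<close> are \<open>harmonic_biorthogonal\<close>, then \<open>g\<close> is orthogonal to \<open>G\<close> and
  \<open>f\<close> to everything orthogonal to \<open>G\<close>, so \<open>kappa f g = 0\<close>: this makes \<open>f * g\<close> harmonic,
  and for \<open>g = f\<close> it is horizontal conformality.\<close>

definition kappa_orthogonal :: "'a::euclidean_space set \<Rightarrow> ('a \<Rightarrow> complex) set \<Rightarrow> ('a \<Rightarrow> complex) \<Rightarrow> bool"
  where "kappa_orthogonal S H f \<longleftrightarrow> C2_on S f \<and> (\<forall>h\<in>H. \<forall>x\<in>S. kappa f h x = 0)"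

definition harmonic_biorthogonal :: "'a::euclidean_space set \<Rightarrow> ('a \<Rightarrow> complex) set \<Rightarrow> ('a \<Rightarrow> complex) \<Rightarrow> bool"
  where "harmonic_biorthogonal S G f \<longleftrightarrow>
    kappa_orthogonal S G f \<and> kappa_orthogonal S {h. kappa_orthogonal S G h} f \<and> (\<forall>x\<in>S. tension f x = 0)"

lemma kappa_orthogonal_const: "kappa_orthogonal S H (\<lambda>x. c)"
  by (simp add: kappa_orthogonal_def C2_on_const kappa_const)

lemma kappa_orthogonal_add:
  "open S \<Longrightarrow> kappa_orthogonal S H f \<Longrightarrow> kappa_orthogonal S H g \<Longrightarrow> kappa_orthogonal S H (\<lambda>x. f x + g x)"
  unfolding kappa_orthogonal_def by (simp add: C2_on_add kappa_add C2_on_differentiable_at)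

lemma kappa_orthogonal_mult:
  "open S \<Longrightarrow> kappa_orthogonal S H f \<Longrightarrow> kappa_orthogonal S H g \<Longrightarrow> kappa_orthogonal S H (\<lambda>x. f x * g x)"
  unfolding kappa_orthogonal_def by (simp add: C2_on_mult kappa_mult C2_on_differentiable_at)

lemma kappa_orthogonal_holomorphic:
  assumes S: "open S" and V: "open V" and g: "g holomorphic_on V"
    and f_in_V: "\<And>x. x \<in> S \<Longrightarrow> f x \<in> V" and f: "kappa_orthogonal S H f"
  shows "kappa_orthogonal S H (\<lambda>x. g (f x))"
proof -
  have f2: "C2_on S f"
    using f by (simp add: kappa_orthogonal_def)
  have "kappa (\<lambda>x. g (f x)) h x = deriv g (f x) * kappa f h x" if "x \<in> S" for h x
    using holomorphic_on_imp_differentiable_at[OF g V f_in_V[OF that]]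
    by (intro kappa_compose_holomorphic C2_on_differentiable_at[OF S f2 that])
  then show ?thesis
    using C2_on_compose[OF S V C2_on_holomorphic[OF V g] f2 f_in_V] f
    by (simp add: kappa_orthogonal_def)
qed

lemma harmonic_biorthogonal_C2_on: "harmonic_biorthogonal S G f \<Longrightarrow> C2_on S f"
  by (simp add: harmonic_biorthogonal_def kappa_orthogonal_def)

lemma harmonic_biorthogonal_kappa_self:
  "harmonic_biorthogonal S G f \<Longrightarrow> x \<in> S \<Longrightarrow> kappa f f x = 0"
  by (simp add: harmonic_biorthogonal_def kappa_orthogonal_def)

lemma harmonic_biorthogonal_const: "harmonic_biorthogonal S G (\<lambda>x. c)"
  by (simp add: harmonic_biorthogonal_def kappa_orthogonal_const tension_const)

lemma harmonic_biorthogonal_add: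
  assumes S: "open S" and f: "harmonic_biorthogonal S G f" and g: "harmonic_biorthogonal S G g"
  shows "harmonic_biorthogonal S G (\<lambda>x. f x + g x)"
  using f g tension_add[OF S harmonic_biorthogonal_C2_on[OF f] harmonic_biorthogonal_C2_on[OF g]]
  by (simp add: harmonic_biorthogonal_def kappa_orthogonal_add[OF S])

lemma harmonic_biorthogonal_mult:
  assumes S: "open S" and f: "harmonic_biorthogonal S G f" and g: "harmonic_biorthogonal S G g"
  shows "harmonic_biorthogonal S G (\<lambda>x. f x * g x)"
proof -
  have "kappa f g x = 0" if "x \<in> S" for x
    using f g that by (simp add: harmonic_biorthogonal_def kappa_orthogonal_def)
  then show ?thesis
    using f g tension_mult[OF S harmonic_biorthogonal_C2_on[OF f] harmonic_biorthogonal_C2_on[OF g]]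
    by (simp add: harmonic_biorthogonal_def kappa_orthogonal_mult[OF S])
qed

lemma harmonic_biorthogonal_holomorphic:
  assumes S: "open S" and V: "open V" and g: "g holomorphic_on V"
    and f_in_V: "\<And>x. x \<in> S \<Longrightarrow> f x \<in> V" and f: "harmonic_biorthogonal S G f"
  shows "harmonic_biorthogonal S G (\<lambda>x. g (f x))"
proof -
  have "tension (\<lambda>x. g (f x)) x = 0" if x: "x \<in> S" for x
  proof (rule tension_compose[OF S V C2_on_holomorphic[OF V g] harmonic_biorthogonal_C2_on[OF f] f_in_V x])
    show "tension f x = 0"
      using f x by (simp add: harmonic_biorthogonal_def)
    show "kappa f f x = 0"
      using harmonic_biorthogonal_kappa_self[OF f x] .
    show "tension g (f x) = 0"
      using harmonic_on_holomorphic[OF V g] f_in_V[OF x] by (simp add: harmonic_on_def)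
  qed
  then show ?thesis
    using f kappa_orthogonal_holomorphic[OF S V g f_in_V]
    by (simp add: harmonic_biorthogonal_def)
qed

lemma harmonic_biorthogonal_sum:
  assumes "open S" "\<And>i. i \<in> I \<Longrightarrow> harmonic_biorthogonal S G (f i)"
  shows "harmonic_biorthogonal S G (\<lambda>x. \<Sum>i\<in>I. f i x)"
  using assms
  by (induction I rule: infinite_finite_induct) (auto intro!: harmonic_biorthogonal_add harmonic_biorthogonal_const)

lemma harmonic_biorthogonal_prod:
  assumes "open S" "\<And>i. i \<in> I \<Longrightarrow> harmonic_biorthogonal S G (f i)"
  shows "harmonic_biorthogonal S G (\<lambda>x. \<Prod>i\<in>I. f i x)"
  using assms
  by (induction I rule: infinite_finite_induct) (auto intro!: harmonic_biorthogonal_mult harmonic_biorthogonal_const)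

lemma harmonic_biorthogonal_power:
  "open S \<Longrightarrow> harmonic_biorthogonal S G f \<Longrightarrow> harmonic_biorthogonal S G (\<lambda>x. f x ^ k)"
  using harmonic_biorthogonal_prod[of S "{..<k}" G "\<lambda>_. f"] by simp

lemma harmonic_biorthogonal_generator:
  assumes "\<And>g. g \<in> G \<Longrightarrow> C2_on S g" and "\<And>g x. g \<in> G \<Longrightarrow> x \<in> S \<Longrightarrow> tension g x = 0"
    and "\<And>g h x. g \<in> G \<Longrightarrow> h \<in> G \<Longrightarrow> x \<in> S \<Longrightarrow> kappa g h x = 0" and "g \<in> G"
  shows "harmonic_biorthogonal S G g"
  using assms unfolding harmonic_biorthogonal_def kappa_orthogonal_def by (auto simp: kappa_commute[of g])

lemma harmonic_morphism_if_harmonic_biorthogonal: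
  "open D \<Longrightarrow> harmonic_biorthogonal D G \<phi> \<Longrightarrow> harmonic_morphism D \<phi>"
  by (intro harmonic_morphismI harmonic_biorthogonal_C2_on harmonic_biorthogonal_kappa_self)
    (auto simp: harmonic_biorthogonal_def)

lemma sum_Basis_prod:
  fixes f :: "'a::euclidean_space \<times> 'b::euclidean_space \<Rightarrow> 'c::comm_monoid_add"
  shows "(\<Sum>b\<in>Basis. f b) = (\<Sum>u\<in>Basis. f (u, 0)) + (\<Sum>v\<in>Basis. f (0, v))"
proof -
  have "inj_on (\<lambda>u. (u::'a, 0::'b)) Basis" "inj_on (\<lambda>v. (0::'a, v::'b)) Basis"
    by (auto intro!: inj_onI)
  then show ?thesis
    unfolding Basis_prod_def by (subst sum.union_disjoint) (auto simp: Basis_prod_def sum.reindex)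
qed

lemma tension_fst:
  "tension (\<lambda>q::'a::euclidean_space \<times> 'b::euclidean_space. F (fst q)) q = tension F (fst q)"
  unfolding tension_def sum_Basis_prod by (simp add: pd_fst pd_zero pd_const)

lemma kappa_fst:
  "kappa (\<lambda>q::'a::euclidean_space \<times> 'b::euclidean_space. F (fst q)) (\<lambda>q. H (fst q)) q = kappa F H (fst q)"
  unfolding kappa_def sum_Basis_prod by (simp add: pd_fst pd_zero)

lemma kappa_snd:
  "kappa (\<lambda>q::'a::euclidean_space \<times> 'b::euclidean_space. F (snd q)) (\<lambda>q. H (snd q)) q = kappa F H (snd q)"
  unfolding kappa_def sum_Basis_prod by (simp add: pd_snd pd_zero)

lemma kappa_fst_snd:
  "kappa (\<lambda>q::'a::euclidean_space \<times> 'b::euclidean_space. F (fst q)) (\<lambda>q. H (snd q)) q = 0"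
  unfolding kappa_def sum_Basis_prod by (simp add: pd_fst pd_snd pd_zero)

lemma kappa_vec_nth: "kappa (\<lambda>z::complex^'n. z $ i) (\<lambda>z. z $ j) z = 0"
proof -
  define re im where "re k = axis k (1::complex)" and "im k = axis k \<i>" for k :: 'n
  have nth: "b $ k = of_real (b \<bullet> re k) + \<i> * of_real (b \<bullet> im k)" for b :: "complex^'n" and k
    by (simp add: re_def im_def inner_axis complex_eq_iff)
  have inner: "(\<Sum>b\<in>Basis. of_real (b \<bullet> x) * of_real (b \<bullet> y)) = (of_real (x \<bullet> y) :: complex)"
    for x y :: "complex^'n"
    by (simp add: euclidean_inner[of x y] of_real_sum inner_commute)
  have "kappa (\<lambda>z::complex^'n. z $ i) (\<lambda>z. z $ j) z = (\<Sum>b\<in>Basis. b $ i * b $ j)"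
    by (simp add: kappa_def pd_linear bounded_linear_vec_nth)
  also have "\<dots> = (\<Sum>b\<in>Basis. of_real (b \<bullet> re i) * of_real (b \<bullet> re j)
      - of_real (b \<bullet> im i) * of_real (b \<bullet> im j)
      + \<i> * (of_real (b \<bullet> re i) * of_real (b \<bullet> im j) + of_real (b \<bullet> im i) * of_real (b \<bullet> re j)))"
    by (subst (1 2) nth) (simp add: algebra_simps)
  also have "\<dots> = of_real (re i \<bullet> re j) - of_real (im i \<bullet> im j)
      + \<i> * (of_real (re i \<bullet> im j) + of_real (im i \<bullet> re j))"
    by (simp only: sum.distrib sum_subtractf sum_distrib_left[symmetric] inner)
  also have "\<dots> = 0"
    by (simp add: re_def im_def inner_axis_axis)
  finally show ?thesis .
qed

section \<open>The quotient\<close>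

lemma harmonic_biorthogonal_product_generators:
  fixes p :: "'a::euclidean_space \<Rightarrow> complex"
  assumes p: "C2_on UNIV p" "\<forall>x. tension p x = 0" "\<forall>x. kappa p p x = 0" and S: "open S"
    and G: "G = insert (\<lambda>q::'a \<times> (complex^'n). p (fst q)) (range (\<lambda>i q. snd q $ i))"
  shows "harmonic_biorthogonal S G (\<lambda>q. p (fst q))"
    and "harmonic_biorthogonal S G (\<lambda>q. snd q $ i)"
proof -
  have coordinate: "bounded_linear (\<lambda>q::'a \<times> (complex^'n). snd q $ k)" for k
    using bounded_linear_compose[OF bounded_linear_vec_nth bounded_linear_snd] .
  have "C2_on S g" if "g \<in> G" for g
    using that C2_on_fst[OF p(1)] C2_on_linear[OF coordinate] by (auto simp: G)
  moreover have "tension g x = 0" if "g \<in> G" for g x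
    using that tension_fst[of p x] p(2) tension_linear[OF coordinate, where x = x] by (auto simp: G)
  moreover have "kappa g h x = 0" if "g \<in> G" "h \<in> G" for g h x
  proof -
    have "kappa (\<lambda>q::'a \<times> (complex^'n). p (fst q)) (\<lambda>q. p (fst q)) x = 0"
      using kappa_fst[of p p x] p(3) by simp
    moreover have "kappa (\<lambda>q::'a \<times> (complex^'n). p (fst q)) (\<lambda>q. snd q $ k) x = 0" for k
      using kappa_fst_snd[of p "\<lambda>z. z $ k" x] by simp
    moreover from this have "kappa (\<lambda>q::'a \<times> (complex^'n). snd q $ k) (\<lambda>q. p (fst q)) x = 0" for k
      by (simp add: kappa_commute)
    moreover have "kappa (\<lambda>q::'a \<times> (complex^'n). snd q $ k) (\<lambda>q. snd q $ l) x = 0" for k l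
      using kappa_snd[of "\<lambda>z. z $ k" "\<lambda>z. z $ l" x] kappa_vec_nth[of k l "snd x"] by simp
    ultimately show ?thesis
      using that by (auto simp: G)
  qed
  ultimately show "harmonic_biorthogonal S G (\<lambda>q. p (fst q))" "harmonic_biorthogonal S G (\<lambda>q. snd q $ i)"
    by (auto intro!: harmonic_biorthogonal_generator simp: G)
qed

lemma harmonic_biorthogonal_hom_hpoly:
  assumes S: "open S" and z: "\<And>i. harmonic_biorthogonal S G (\<lambda>q. snd q $ i)" and R: "hom_hpoly k R"
  shows "harmonic_biorthogonal S G (\<lambda>q::'a::euclidean_space \<times> (complex^'n). R (snd q))"
proof -
  obtain c :: "('n \<Rightarrow> nat) \<Rightarrow> complex"
    where "R = (\<lambda>z. \<Sum>\<alpha>\<in>{\<alpha>. sum \<alpha> UNIV = k}. c \<alpha> * (\<Prod>i\<in>UNIV. (z $ i) ^ \<alpha> i))"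
    using R unfolding hom_hpoly_def by blast
  then show ?thesis
    by (simp only:) (intro harmonic_biorthogonal_sum harmonic_biorthogonal_mult harmonic_biorthogonal_const
        harmonic_biorthogonal_prod harmonic_biorthogonal_power z S)
qed

lemma harmonic_morphism_quotient:
  fixes p :: "'a::euclidean_space \<Rightarrow> complex" and P Q :: "complex^'n \<Rightarrow> complex"
  assumes p: "C2_on UNIV p" "\<forall>x. tension p x = 0" "\<forall>x. kappa p p x = 0"
    and P: "hom_hpoly k P" and Q: "hom_hpoly m Q" and V: "open V" and g: "g holomorphic_on V"
  shows "harmonic_morphism {(x, z). Q z \<noteq> 0 \<and> p x \<in> V} (\<lambda>(x, z). (g (p x) + P z) / Q z)"
proof -
  define G where "G = insert (\<lambda>q::'a \<times> (complex^'n). p (fst q)) (range (\<lambda>i q. snd q $ i))"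
  define D where "D = {(x, z). Q z \<noteq> 0 \<and> p x \<in> V}"
  note generators = harmonic_biorthogonal_product_generators[OF p _ G_def]
  have "continuous_on UNIV (\<lambda>q::'a \<times> (complex^'n). Q (snd q))"
    using harmonic_biorthogonal_hom_hpoly[OF open_UNIV generators(2) Q]
    by (intro C2_on_continuous harmonic_biorthogonal_C2_on) auto
  moreover have "continuous_on UNIV (\<lambda>q::'a \<times> (complex^'n). p (fst q))"
    by (intro C2_on_continuous C2_on_fst p(1))
  moreover have "D = (\<lambda>q. Q (snd q)) -` (- {0}) \<inter> (\<lambda>q. p (fst q)) -` V"
    by (auto simp: D_def)
  ultimately have D: "open D"
    using V by (auto intro!: open_Int open_vimage)
  have "harmonic_biorthogonal D G (\<lambda>q. inverse (Q (snd q)))"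
    by (rule harmonic_biorthogonal_holomorphic[where g = inverse and V = "- {0}", OF D _ _ _
          harmonic_biorthogonal_hom_hpoly[OF D generators(2)[OF D] Q]])
      (auto simp: D_def intro!: holomorphic_intros)
  moreover have "harmonic_biorthogonal D G (\<lambda>q. g (p (fst q)))"
    by (rule harmonic_biorthogonal_holomorphic[OF D V g _ generators(1)[OF D]]) (auto simp: D_def)
  ultimately have "harmonic_biorthogonal D G (\<lambda>q. (g (p (fst q)) + P (snd q)) * inverse (Q (snd q)))"
    by (intro harmonic_biorthogonal_mult harmonic_biorthogonal_add D
        harmonic_biorthogonal_hom_hpoly[OF D generators(2)[OF D] P])
  then show ?thesis
    using harmonic_morphism_if_harmonic_biorthogonal[OF D] unfolding D_def
    by (simp add: case_prod_beta' divide_inverse)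
qed

theorem mainTheorem1:
  fixes p :: "real^3 \<Rightarrow> complex"
    and P Q :: "complex^'n::finite \<Rightarrow> complex"
    and d :: nat
  assumes "d \<ge> 1"
    and "hom_quadratic p"
    and "\<forall>x. tension p x = 0"
    and "\<forall>x. kappa p p x = 0"
    and "hom_hpoly d P" and "hom_hpoly d Q"
    and "\<forall>a b::complex. (\<forall>z. a * P z + b * Q z = 0) \<longrightarrow> a = 0 \<and> b = 0"
  shows "harmonic_morphism
     (if even d then {(x, z). Q z \<noteq> 0}
      else {(x, z). Q z \<noteq> 0 \<and> \<not> (p x \<in> \<real> \<and> Re (p x) \<le> 0)})
     (\<lambda>(x, z). ((if even d then p x ^ (d div 2) else csqrt (p x) ^ d) + P z) / Q z)"
proof (cases "even d")
  case True
  have "harmonic_morphism {(x, z). Q z \<noteq> 0 \<and> p x \<in> UNIV} (\<lambda>(x, z). (p x ^ (d div 2) + P z) / Q z)"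
    using C2_on_hom_quadratic[OF assms(2)] assms(3-6)
    by (rule harmonic_morphism_quotient[where g = "\<lambda>w. w ^ (d div 2)"]) (auto intro: holomorphic_intros)
  with True show ?thesis
    by simp
next
  case False
  have "harmonic_morphism {(x, z). Q z \<noteq> 0 \<and> p x \<in> - \<real>\<^sub>\<le>\<^sub>0} (\<lambda>(x, z). (csqrt (p x) ^ d + P z) / Q z)"
    using C2_on_hom_quadratic[OF assms(2)] assms(3-6)
    by (rule harmonic_morphism_quotient[where g = "\<lambda>w. csqrt w ^ d"])
      (auto intro!: holomorphic_intros closed_nonpos_Reals_complex)
  moreover have "p x \<in> - \<real>\<^sub>\<le>\<^sub>0 \<longleftrightarrow> \<not> (p x \<in> \<real> \<and> Re (p x) \<le> 0)" for x
    by (auto simp: complex_nonpos_Reals_iff complex_is_Real_iff)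
  ultimately show ?thesis
    using False by simp
qed

end
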